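(* Let $m,d\ge1$ be integers, let $\preceq$ be the dominance order on $[m]^d$, and for $x\in[0,m-1]^d$ let $V(x)=\prod_{i=1}^d(x_i+1)$. For $u\preceq w$ set $\hat y_{uw}=1/V(w-u)$, and for $u\preceq v\preceq w$ set $$\hat y'_{uvw}=\hat y_{uw}\frac{V(v-u)}{V(v-u)+V(w-v)},\qquad \hat y''_{uvw}=\hat y_{uw}\frac{V(w-v)}{V(v-u)+V(w-v)}.$$ Then for all $u,v\in[m]^d$ with $u\preceq v$, $$\sum_{w\in[m]^d:\ v\preceq w}\hat y'_{uvw}+\sum_{w\in[m]^d:\ w\preceq u}\hat y''_{wuv}\le (4\pi)^d.$$
   Context: The dominance order: $x\preceq y$ iff $x_i\le y_i$ for all $i\in[d]$. *)

theory Defs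
  imports Complex_Main
begin

text \<open>Points of [m]^d are functions from a finite index type 'd (with CARD('d) = d)
  to nat, with every coordinate in {1..m}.\<close>

definition grid :: "nat \<Rightarrow> ('d::finite \<Rightarrow> nat) set" where
  "grid m = {x. \<forall>i. 1 \<le> x i \<and> x i \<le> m}"

definition dom_le :: "('d::finite \<Rightarrow> nat) \<Rightarrow> ('d \<Rightarrow> nat) \<Rightarrow> bool" where
  "dom_le x y \<longleftrightarrow> (\<forall>i. x i \<le> y i)"

definition V :: "('d::finite \<Rightarrow> nat) \<Rightarrow> real" where
  "V x = (\<Prod>i\<in>UNIV. real (x i) + 1)"

definition vdiff :: "('d::finite \<Rightarrow> nat) \<Rightarrow> ('d \<Rightarrow> nat) \<Rightarrow> ('d \<Rightarrow> nat)" where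
  "vdiff w u = (\<lambda>i. w i - u i)"

definition yhat :: "('d::finite \<Rightarrow> nat) \<Rightarrow> ('d \<Rightarrow> nat) \<Rightarrow> real" where
  "yhat u w = 1 / V (vdiff w u)"

definition yhat1 :: "('d::finite \<Rightarrow> nat) \<Rightarrow> ('d \<Rightarrow> nat) \<Rightarrow> ('d \<Rightarrow> nat) \<Rightarrow> real" where
  "yhat1 u v w = yhat u w * (V (vdiff v u) / (V (vdiff v u) + V (vdiff w v)))"

definition yhat2 :: "('d::finite \<Rightarrow> nat) \<Rightarrow> ('d \<Rightarrow> nat) \<Rightarrow> ('d \<Rightarrow> nat) \<Rightarrow> real" where
  "yhat2 u v w = yhat u w * (V (vdiff w v) / (V (vdiff v u) + V (vdiff w v)))"

end

theory Submission
  imports Defs "HOL-Library.FuncSet"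
begin

text \<open>
  Write \<open>a = v - u\<close> and \<open>b = w - v\<close> coordinatewise. By AM-GM, \<open>V a / (V a + V b) \<le> \<surd>(V a / V b) / 2\<close>,
  so \<open>yhat1 u v w\<close> is at most half a product over the coordinates of
  \<open>\<surd>(a\<^sub>i+1) / ((a\<^sub>i+b\<^sub>i+1) \<surd>(b\<^sub>i+1))\<close>; the same bound holds for \<open>yhat2 w u v\<close> with \<open>b = u - w\<close>.
  Summing over the box of admissible \<open>w\<close> factorises into a product of one-dimensional sums,
  and each of those is at most \<open>8\<close> by a telescoping estimate, uniformly in \<open>a\<^sub>i\<close>.
  Hence each of the two sums is at most \<open>8\<^sup>d / 2\<close>, and \<open>8 \<le> 4\<pi>\<close>.
\<close>

definition coord_term :: "real \<Rightarrow> nat \<Rightarrow> real" where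
  "coord_term x b = sqrt x / ((x + real b) * sqrt (real b + 1))"

definition coord_potential :: "real \<Rightarrow> nat \<Rightarrow> real" where
  "coord_potential x n = 8 * sqrt (real n) / (sqrt (real n) + sqrt x)"

lemma coord_term_nonneg: "x \<ge> 1 \<Longrightarrow> coord_term x b \<ge> 0"
  unfolding coord_term_def by simp

lemma coord_potential_le: "x \<ge> 1 \<Longrightarrow> coord_potential x n \<le> 8"
  unfolding coord_potential_def by (simp add: divide_le_eq add_nonneg_pos)

text \<open>The telescoping step with \<open>r = \<surd>n\<close>, \<open>s = \<surd>(n+1)\<close>, \<open>t = \<surd>x\<close>.\<close>

lemma sqrt_telescope_ineq:
  fixes r s t :: real
  assumes s2: "s\<^sup>2 = r\<^sup>2 + 1" and r: "r \<ge> 0" and s: "s > 0" and t: "t \<ge> 1"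
  shows "t / ((t\<^sup>2 + s\<^sup>2 - 1) * s) \<le> 8 * s / (s + t) - 8 * r / (r + t)"
proof -
  have rs: "r \<le> s"
    using s2 r s by (metis less_add_one order_less_imp_le power2_le_imp_le)
  have sr: "s - r = 1 / (s + r)"
    using s2 r s by (simp add: field_simps power2_eq_square)
  have "8 * s / (s + t) - 8 * r / (r + t) = 8 * t * (s - r) / ((s + t) * (r + t))"
    using r s t by (simp add: field_simps)
  also have "\<dots> = 8 * t / ((s + r) * (s + t) * (r + t))"
    unfolding sr using r s t by (simp add: field_simps)
  also have "\<dots> \<ge> 4 * t / (s * (s + t)\<^sup>2)"
  proof -
    have "(s + r) * (s + t) * (r + t) \<le> (2 * s) * (s + t) * (s + t)"
      using rs r s t by (intro mult_mono) auto
    then have "8 * t / ((2 * s) * (s + t) * (s + t)) \<le> 8 * t / ((s + r) * (s + t) * (r + t))"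
      using rs r s t by (intro divide_left_mono) auto
    then show ?thesis by (simp add: power2_eq_square mult.assoc)
  qed
  moreover have "t / ((t\<^sup>2 + s\<^sup>2 - 1) * s) \<le> 4 * t / (s * (s + t)\<^sup>2)"
  proof -
    have "(s + t)\<^sup>2 \<le> 2 * (s\<^sup>2 + t\<^sup>2)"
      using sum_squares_ge_zero[of "s - t" 0] by (simp add: power2_eq_square algebra_simps)
    also have "\<dots> \<le> 4 * (t\<^sup>2 + s\<^sup>2 - 1)"
      using one_le_power[OF t, of 2] s2 by (smt (verit) zero_le_power2)
    finally have "s * (s + t)\<^sup>2 / 4 \<le> (t\<^sup>2 + s\<^sup>2 - 1) * s"
      using s by (simp add: mult.commute)
    then have "t / ((t\<^sup>2 + s\<^sup>2 - 1) * s) \<le> t / (s * (s + t)\<^sup>2 / 4)"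
      using s t by (intro frac_le) auto
    then show ?thesis by (simp add: mult.commute)
  qed
  ultimately show ?thesis by linarith
qed

lemma coord_term_le_potential_diff:
  assumes "x \<ge> 1"
  shows "coord_term x n \<le> coord_potential x (Suc n) - coord_potential x n"
  using sqrt_telescope_ineq[of "sqrt (real n + 1)" "sqrt (real n)" "sqrt x"] assms
  by (simp add: coord_term_def coord_potential_def add.commute)

lemma sum_coord_term_lessThan_le: "x \<ge> 1 \<Longrightarrow> (\<Sum>b<n. coord_term x b) \<le> coord_potential x n"
proof (induction n)
  case 0
  then show ?case by (simp add: coord_potential_def)
next
  case (Suc n)
  then show ?case using coord_term_le_potential_diff[of x n] by simp
qed

lemma sum_coord_term_reindex_le:
  assumes "x \<ge> 1" "finite K" "inj_on g K"
  shows "(\<Sum>k\<in>K. coord_term x (g k)) \<le> 8"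
proof -
  obtain n where n: "g ` K \<subseteq> {..<n}"
    by (meson assms(2) finite_imageI finite_nat_set_iff_bounded lessThan_iff subsetI)
  have "(\<Sum>k\<in>K. coord_term x (g k)) = (\<Sum>b\<in>g ` K. coord_term x b)"
    using assms(3) by (simp add: sum.reindex)
  also have "\<dots> \<le> (\<Sum>b<n. coord_term x b)"
    using n coord_term_nonneg[OF assms(1)] by (intro sum_mono2) auto
  also have "\<dots> \<le> 8"
    using sum_coord_term_lessThan_le[OF assms(1)] coord_potential_le[OF assms(1)] by (rule order.trans)
  finally show ?thesis .
qed

lemma sum_PiE_prod_coord_term_le:
  fixes x :: "'d::finite \<Rightarrow> real" and K :: "'d \<Rightarrow> nat set" and g :: "'d \<Rightarrow> nat \<Rightarrow> nat"
  assumes "\<And>i. x i \<ge> 1" "\<And>i. finite (K i)" "\<And>i. inj_on (g i) (K i)"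
  shows "(\<Sum>w\<in>PiE UNIV K. \<Prod>i\<in>UNIV. coord_term (x i) (g i (w i))) \<le> 8 ^ card (UNIV :: 'd set)"
proof -
  have "(\<Sum>w\<in>PiE UNIV K. \<Prod>i\<in>UNIV. coord_term (x i) (g i (w i)))
      = (\<Prod>i\<in>UNIV. \<Sum>k\<in>K i. coord_term (x i) (g i k))"
    using assms(2) by (simp add: prod_sum_PiE)
  also have "\<dots> \<le> (\<Prod>i\<in>(UNIV::'d set). 8)"
    using assms coord_term_nonneg
    by (intro prod_mono conjI sum_nonneg sum_coord_term_reindex_le) auto
  finally show ?thesis by simp
qed

lemma real_sqrt_prod: "finite A \<Longrightarrow> sqrt (prod f A) = (\<Prod>i\<in>A. sqrt (f i))"
  by (induction A rule: finite_induct) (auto simp: real_sqrt_mult)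

lemma frac_le_sqrt_div:
  fixes A B :: real
  assumes "A > 0" "B > 0"
  shows "A / (A + B) \<le> sqrt A / (2 * sqrt B)"
proof -
  have "2 * (sqrt A * sqrt B) \<le> A + B"
    using arith_geo_mean_sqrt[of A B] assms by (simp add: real_sqrt_mult)
  then have "A / (A + B) \<le> A / (2 * (sqrt A * sqrt B))"
    using assms by (intro divide_left_mono) auto
  also have "\<dots> = sqrt A / (2 * sqrt B)"
    using assms by (simp add: field_simps real_sqrt_mult_self)
  finally show ?thesis .
qed

lemma split_weight_le:
  fixes a b :: "'d::finite \<Rightarrow> nat"
  shows "1 / V (\<lambda>i. a i + b i) * (V a / (V a + V b))
         \<le> 1/2 * (\<Prod>i\<in>UNIV. coord_term (real (a i) + 1) (b i))"
proof -
  have pos: "V a > 0" "V b > 0" "V (\<lambda>i. a i + b i) > 0"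
    unfolding V_def by (auto intro: prod_pos simp: add_pos_nonneg)
  have "1 / V (\<lambda>i. a i + b i) * (V a / (V a + V b))
      \<le> 1 / V (\<lambda>i. a i + b i) * (sqrt (V a) / (2 * sqrt (V b)))"
    using pos by (intro mult_left_mono frac_le_sqrt_div) auto
  also have "\<dots> = 1/2 * (\<Prod>i\<in>UNIV. coord_term (real (a i) + 1) (b i))"
    by (simp add: V_def coord_term_def real_sqrt_prod prod_dividef prod.distrib add_ac)
  finally show ?thesis .
qed

lemma vdiff_add:
  "dom_le u v \<Longrightarrow> dom_le v w \<Longrightarrow> vdiff w u = (\<lambda>i. vdiff v u i + vdiff w v i)"
  unfolding dom_le_def vdiff_def by (auto intro!: ext simp: le_add_diff_inverse)

lemma yhat1_le:
  assumes "dom_le u v" "dom_le v w"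
  shows "yhat1 u v w \<le> 1/2 * (\<Prod>i\<in>UNIV. coord_term (real (v i - u i) + 1) (w i - v i))"
  using split_weight_le[of "vdiff v u" "vdiff w v"]
  by (simp add: yhat1_def yhat_def vdiff_add[OF assms]) (simp add: vdiff_def)

lemma yhat2_le:
  assumes "dom_le w u" "dom_le u v"
  shows "yhat2 w u v \<le> 1/2 * (\<Prod>i\<in>UNIV. coord_term (real (v i - u i) + 1) (u i - w i))"
  using split_weight_le[of "vdiff v u" "vdiff u w"]
  by (simp add: yhat2_def yhat_def vdiff_add[OF assms] add_ac) (simp add: vdiff_def)

lemma grid_dom_ge_eq_PiE:
  "v \<in> grid m \<Longrightarrow> {w \<in> grid m. dom_le v w} = PiE UNIV (\<lambda>i. {v i..m})"
  unfolding grid_def dom_le_def PiE_UNIV_domain by (auto simp: Pi_iff) (meson le_trans)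

lemma grid_dom_le_eq_PiE:
  "u \<in> grid m \<Longrightarrow> {w \<in> grid m. dom_le w u} = PiE UNIV (\<lambda>i. {1..u i})"
  unfolding grid_def dom_le_def PiE_UNIV_domain by (auto simp: Pi_iff) (meson le_trans)

theorem lemma3:
  fixes m :: nat and u v :: "'d::finite \<Rightarrow> nat"
  assumes "m \<ge> 1"
    and "u \<in> grid m" and "v \<in> grid m" and "dom_le u v"
  shows "(\<Sum>w\<in>{w \<in> grid m. dom_le v w}. yhat1 u v w)
         + (\<Sum>w\<in>{w \<in> grid m. dom_le w u}. yhat2 w u v)
         \<le> (4 * pi) ^ card (UNIV :: 'd set)"
proof -
  define x where "x i = real (v i - u i) + 1" for i
  have x_ge: "x i \<ge> 1" for i
    by (simp add: x_def)
  have inj_above: "inj_on (\<lambda>k. k - v i) {v i..m}" for i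
    by (rule inj_on_diff_nat) simp
  have inj_below: "inj_on (\<lambda>k. u i - k) {1..u i}" for i
    by (auto simp: inj_on_def)
  have "(\<Sum>w\<in>{w \<in> grid m. dom_le v w}. yhat1 u v w)
      \<le> 1/2 * (\<Sum>w\<in>PiE UNIV (\<lambda>i. {v i..m}). \<Prod>i\<in>UNIV. coord_term (x i) (w i - v i))"
    unfolding grid_dom_ge_eq_PiE[OF assms(3)] sum_distrib_left x_def
    by (intro sum_mono yhat1_le assms(4)) (auto simp: dom_le_def)
  also have "\<dots> \<le> 8 ^ card (UNIV :: 'd set) / 2"
    using sum_PiE_prod_coord_term_le[OF x_ge _ inj_above] by simp
  finally have A: "(\<Sum>w\<in>{w \<in> grid m. dom_le v w}. yhat1 u v w) \<le> 8 ^ card (UNIV :: 'd set) / 2" .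
  have "(\<Sum>w\<in>{w \<in> grid m. dom_le w u}. yhat2 w u v)
      \<le> 1/2 * (\<Sum>w\<in>PiE UNIV (\<lambda>i. {1..u i}). \<Prod>i\<in>UNIV. coord_term (x i) (u i - w i))"
    unfolding grid_dom_le_eq_PiE[OF assms(2)] sum_distrib_left x_def
    by (intro sum_mono yhat2_le assms(4)) (auto simp: dom_le_def)
  also have "\<dots> \<le> 8 ^ card (UNIV :: 'd set) / 2"
    using sum_PiE_prod_coord_term_le[OF x_ge _ inj_below] by simp
  finally have B: "(\<Sum>w\<in>{w \<in> grid m. dom_le w u}. yhat2 w u v) \<le> 8 ^ card (UNIV :: 'd set) / 2" .
  have "(8::real) ^ card (UNIV :: 'd set) \<le> (4 * pi) ^ card (UNIV :: 'd set)"
    using pi_ge_two by (intro power_mono) auto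
  with A B show ?thesis by linarith
qed

end
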